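(* Let $\lambda\in\mathbb R$, $\alpha=1-\lambda$, and let $\mathcal Q_\lambda$ be a $\lambda$-exponential family satisfying Assumption A and Assumption B (with common support $S_\lambda$). Let $\pi\in\mathcal P(\mathcal X,m)$ be $\mathcal Q_\lambda$-compatible. If $\vartheta_*\in\operatorname{dom}\varphi_\lambda$ satisfies $q^{(\alpha)}_{\vartheta_*}(T)=\pi^{(\alpha)}_{|S_\lambda}(T)$, then $\vartheta_*$ is a solution of the problem $\min_{q_\vartheta\in\mathcal Q_\lambda}RD_\alpha(\pi,q_\vartheta)$.
   Context: $\mathcal H$ is a finite-dimensional real Hilbert space; $\mathcal X$ a measurable space with measure $m$; $\mathcal P(\mathcal X,m)$ the probability densities w.r.t. $m$. For a density $p$ and measurable $f$, $p(f)=\int fp\,dm$. Conventions $\log s=-\infty$ for $s\le0$, $\exp(-\infty)=0$. Coupling $c_\lambda(u,v)=\frac1\lambda\log(1+\lambda\langle u,v\rangle)$ ($\lambda\ne0$), $c_0=\langle\cdot,\cdot\rangle$. For measurable $T:\mathcal X\to\mathcal H$: $\varphi_\lambda(\vartheta)=\log\int\exp(c_\lambda(\vartheta,T))dm$, $\operatorname{dom}\varphi_\lambda=\{\varphi_\lambda<+\infty\}$, $q_\vartheta=\exp(c_\lambda(\vartheta,T)-\varphi_\lambda(\vartheta))$, $\mathcal Q_\lambda=\{q_\vartheta:\vartheta\in\operatorname{dom}\varphi_\lambda\}$, support $S_\vartheta=\{x:1+\lambda\langle\vartheta,T(x)\rangle>0\}$. Escort: $p^{(\alpha)}=p^\alpha/\int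 p^\alpha dm$; $p_{|Y}=p\mathbf 1_Y$ and $p^{(\alpha)}_{|Y}$ is the escort of $p_{|Y}$. Rényi divergence: $RD_\alpha(p_1,p_2)=\frac1{\alpha-1}\log\int p_1^\alpha p_2^{1-\alpha}dm$ for $\alpha\ne1$, $RD_1(p_1,p_2)=KL(p_1,p_2)=\int p_1\log(p_1/p_2)dm$, with value $+\infty$ when undefined. Compatibility: $p$ is $q_\vartheta$-compatible if $\int p_{|S_\vartheta}^\alpha dm\in(0,\infty)$ and $\int Tp_{|S_\vartheta}^\alpha dm$ has finite components; $\mathcal Q_\lambda$-compatible if this holds for every $\vartheta\in\operatorname{dom}\varphi_\lambda$. Assumption A: $\alpha>0$ and $\varphi_\lambda$ is proper (never $-\infty$, nonempty domain). Assumption B: there is a nonempty $S_\lambda\subset\mathcal X$ with $S_\vartheta=S_\lambda$ for all $\vartheta\in\operatorname{dom}\varphi_\lambda$, and every $q_\vartheta\in\mathcal Q_\lambda$ is $\mathcal Q_\lambda$-compatible. *)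

theory Defs
  imports "HOL-Analysis.Analysis"
begin

definition eln :: "ennreal \<Rightarrow> ereal" where
  "eln I = (if I = 0 then -\<infinity> else if I = \<infinity> then \<infinity> else ereal (ln (enn2real I)))"

text \<open>exp(c_lambda(theta, T x)), with log s = -\<infinity> for s \<le> 0 and exp(-\<infinity>) = 0.\<close>
definition expc :: "real \<Rightarrow> 'h::real_inner \<Rightarrow> ('x \<Rightarrow> 'h) \<Rightarrow> 'x \<Rightarrow> real" where
  "expc l \<theta> T x =
     (if l = 0 then exp (\<theta> \<bullet> T x)
      else if 1 + l * (\<theta> \<bullet> T x) > 0 then (1 + l * (\<theta> \<bullet> T x)) powr (1 / l) else 0)"

definition partfn :: "'x measure \<Rightarrow> ('x \<Rightarrow> 'h::real_inner) \<Rightarrow> real \<Rightarrow> 'h \<Rightarrow> ennreal" where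
  "partfn m T l \<theta> = (\<integral>\<^sup>+ x. ennreal (expc l \<theta> T x) \<partial>m)"

definition phi :: "'x measure \<Rightarrow> ('x \<Rightarrow> 'h::real_inner) \<Rightarrow> real \<Rightarrow> 'h \<Rightarrow> ereal" where
  "phi m T l \<theta> = eln (partfn m T l \<theta>)"

definition dom_phi :: "'x measure \<Rightarrow> ('x \<Rightarrow> 'h::real_inner) \<Rightarrow> real \<Rightarrow> 'h set" where
  "dom_phi m T l = {\<theta>. phi m T l \<theta> < \<infinity>}"

definition qdens :: "'x measure \<Rightarrow> ('x \<Rightarrow> 'h::real_inner) \<Rightarrow> real \<Rightarrow> 'h \<Rightarrow> 'x \<Rightarrow> real" where
  "qdens m T l \<theta> x = expc l \<theta> T x / enn2real (partfn m T l \<theta>)"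

definition supp :: "'x measure \<Rightarrow> ('x \<Rightarrow> 'h::real_inner) \<Rightarrow> real \<Rightarrow> 'h \<Rightarrow> 'x set" where
  "supp m T l \<theta> = {x \<in> space m. 1 + l * (\<theta> \<bullet> T x) > 0}"

definition is_density :: "'x measure \<Rightarrow> ('x \<Rightarrow> real) \<Rightarrow> bool" where
  "is_density m p \<longleftrightarrow> p \<in> borel_measurable m \<and> (\<forall>x\<in>space m. 0 \<le> p x)
      \<and> (\<integral>\<^sup>+ x. ennreal (p x) \<partial>m) = 1"

definition restr :: "('x \<Rightarrow> real) \<Rightarrow> 'x set \<Rightarrow> 'x \<Rightarrow> real" where
  "restr p Y x = p x * indicator Y x"

definition escort_exp :: "'x measure \<Rightarrow> real \<Rightarrow> ('x \<Rightarrow> real) \<Rightarrow> ('x \<Rightarrow> 'h::euclidean_space) \<Rightarrow> 'h" where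
  "escort_exp m \<alpha> p f = (1 / (\<integral> x. p x powr \<alpha> \<partial>m)) *\<^sub>R (\<integral> x. p x powr \<alpha> *\<^sub>R f x \<partial>m)"

definition compatible :: "'x measure \<Rightarrow> ('x \<Rightarrow> 'h::euclidean_space) \<Rightarrow> real \<Rightarrow> real \<Rightarrow> ('x \<Rightarrow> real) \<Rightarrow> 'h \<Rightarrow> bool" where
  "compatible m T l \<alpha> p \<theta> \<longleftrightarrow>
     (let S = supp m T l \<theta> in
       0 < (\<integral>\<^sup>+ x. ennreal (restr p S x powr \<alpha>) \<partial>m)
       \<and> (\<integral>\<^sup>+ x. ennreal (restr p S x powr \<alpha>) \<partial>m) < \<infinity>
       \<and> integrable m (\<lambda>x. restr p S x powr \<alpha> *\<^sub>R T x))"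

definition Q_compatible :: "'x measure \<Rightarrow> ('x \<Rightarrow> 'h::euclidean_space) \<Rightarrow> real \<Rightarrow> real \<Rightarrow> ('x \<Rightarrow> real) \<Rightarrow> bool" where
  "Q_compatible m T l \<alpha> p \<longleftrightarrow> (\<forall>\<theta>\<in>dom_phi m T l. compatible m T l \<alpha> p \<theta>)"

definition assumptionA :: "'x measure \<Rightarrow> ('x \<Rightarrow> 'h::euclidean_space) \<Rightarrow> real \<Rightarrow> real \<Rightarrow> bool" where
  "assumptionA m T l \<alpha> \<longleftrightarrow> \<alpha> > 0 \<and> (\<forall>\<theta>. phi m T l \<theta> \<noteq> -\<infinity>) \<and> dom_phi m T l \<noteq> {}"

definition assumptionB :: "'x measure \<Rightarrow> ('x \<Rightarrow> 'h::euclidean_space) \<Rightarrow> real \<Rightarrow> real \<Rightarrow> 'x set \<Rightarrow> bool" where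
  "assumptionB m T l \<alpha> S \<longleftrightarrow> S \<noteq> {} \<and> S \<subseteq> space m
     \<and> (\<forall>\<theta>\<in>dom_phi m T l. supp m T l \<theta> = S)
     \<and> (\<forall>\<theta>\<in>dom_phi m T l. Q_compatible m T l \<alpha> (qdens m T l \<theta>))"

text \<open>Integrand p1^alpha p2^(1-alpha) in [0,\<infinity>], with the conventions 0^a = 0 (a>0),
  0^a = \<infinity> (a<0), 0 * \<infinity> = 0.\<close>
definition rd_integrand :: "real \<Rightarrow> real \<Rightarrow> real \<Rightarrow> ennreal" where
  "rd_integrand \<alpha> a b =
     (if a = 0 then 0
      else if b = 0 then (if \<alpha> < 1 then 0 else \<infinity>)
      else ennreal (a powr \<alpha> * b powr (1 - \<alpha>)))"

definition KL_div :: "'x measure \<Rightarrow> ('x \<Rightarrow> real) \<Rightarrow> ('x \<Rightarrow> real) \<Rightarrow> ereal" where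
  "KL_div m p1 p2 =
     (if (AE x in m. p1 x > 0 \<longrightarrow> p2 x > 0) \<and> integrable m (\<lambda>x. p1 x * ln (p1 x / p2 x))
      then ereal (\<integral> x. p1 x * ln (p1 x / p2 x) \<partial>m) else \<infinity>)"

definition renyi_div :: "'x measure \<Rightarrow> real \<Rightarrow> ('x \<Rightarrow> real) \<Rightarrow> ('x \<Rightarrow> real) \<Rightarrow> ereal" where
  "renyi_div m \<alpha> p1 p2 =
     (if \<alpha> = 1 then KL_div m p1 p2
      else ereal (1 / (\<alpha> - 1)) * eln (\<integral>\<^sup>+ x. rd_integrand \<alpha> (p1 x) (p2 x) \<partial>m))"

end

theory Submission
  imports Defs
begin

(* The moment condition says that the escort weights of \<pi> (restricted to S) and of q\<^sub>\<theta>s have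
   proportional zeroth and first moments. On S, q\<^sub>\<theta> powr (1 - \<alpha>) = q\<^sub>\<theta> powr l is an affine
   function of T, so it integrates against both weights in the same proportion: the Renyi integral
   of \<pi> against q\<^sub>\<theta> is a fixed multiple of the Hellinger integral of q\<^sub>\<theta>s against q\<^sub>\<theta>, plus a
   contribution from outside S that does not depend on \<theta>. By weighted AM-GM this Hellinger
   integral is at most 1 for \<alpha> < 1 and at least 1 for \<alpha> > 1, with equality at \<theta> = \<theta>s.
   For \<alpha> = 1, ln q\<^sub>\<theta> is affine in T, and the same argument reduces the claim to Gibbs'
   inequality KL(q\<^sub>\<theta>s, q\<^sub>\<theta>) \<ge> 0. *)

section \<open>Hellinger integrals, Kullback-Leibler and Renyi divergences\<close>

lemma Youngs_inequality_reverse: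
  fixes a b \<alpha> :: real
  assumes "1 \<le> \<alpha>" "0 < a" "0 < b"
  shows "\<alpha> * a + (1 - \<alpha>) * b \<le> a powr \<alpha> * b powr (1 - \<alpha>)"
proof -
  define c where "c = a powr \<alpha> * b powr (1 - \<alpha>)"
  have "c > 0" using assms by (simp add: c_def)
  have "c powr (1 / \<alpha>) * b powr (1 - 1 / \<alpha>) = a"
    using assms by (simp add: c_def powr_mult powr_powr field_simps flip: powr_add)
  moreover have "c powr (1 / \<alpha>) * b powr (1 - 1 / \<alpha>) \<le> 1 / \<alpha> * c + (1 - 1 / \<alpha>) * b"
    using assms \<open>c > 0\<close> by (intro Youngs_inequality_0) auto
  ultimately have "\<alpha> * a \<le> \<alpha> * (1 / \<alpha> * c + (1 - 1 / \<alpha>) * b)"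
    using assms by simp
  then show ?thesis
    using assms by (simp add: c_def algebra_simps)
qed

lemma is_density_integral:
  assumes "is_density M p"
  shows "integrable M p" "integral\<^sup>L M p = 1"
  using assms nn_integral_eq_integrable[of p M 1] by (auto simp: is_density_def)

text \<open>Since \<open>0 powr a = 0\<close>, points where \<open>q\<close> vanishes contribute \<open>0\<close> even when \<open>\<alpha> > 1\<close>.\<close>

definition hellinger_integral :: "'x measure \<Rightarrow> real \<Rightarrow> ('x \<Rightarrow> real) \<Rightarrow> ('x \<Rightarrow> real) \<Rightarrow> real" where
  "hellinger_integral M \<alpha> p q = (\<integral>x. p x powr \<alpha> * q x powr (1 - \<alpha>) \<partial>M)"

lemma hellinger_integral_self:
  assumes "\<forall>x\<in>space M. 0 \<le> p x"
  shows "hellinger_integral M \<alpha> p p = integral\<^sup>L M p"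
  unfolding hellinger_integral_def
proof (rule Bochner_Integration.integral_cong)
  fix x assume "x \<in> space M"
  then show "p x powr \<alpha> * p x powr (1 - \<alpha>) = p x"
    using assms by (cases "p x = 0") (simp_all flip: powr_add)
qed simp

lemma hellinger_integral_le_one:
  assumes "0 \<le> \<alpha>" "\<alpha> \<le> 1" and p: "is_density M p" and q: "is_density M q"
    and int: "integrable M (\<lambda>x. p x powr \<alpha> * q x powr (1 - \<alpha>))"
  shows "hellinger_integral M \<alpha> p q \<le> 1"
proof -
  have "p x powr \<alpha> * q x powr (1 - \<alpha>) \<le> \<alpha> * p x + (1 - \<alpha>) * q x" if "x \<in> space M" for x
  proof (cases "p x = 0 \<or> q x = 0")
    case True
    then show ?thesis using that assms by (auto simp: is_density_def)
  next
    case False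
    then show ?thesis using that assms by (intro Youngs_inequality_0) (auto simp: is_density_def)
  qed
  then have "hellinger_integral M \<alpha> p q \<le> (\<integral>x. \<alpha> * p x + (1 - \<alpha>) * q x \<partial>M)"
    unfolding hellinger_integral_def
    using is_density_integral[OF p] is_density_integral[OF q] int by (intro integral_mono) auto
  also have "\<dots> = 1"
    using is_density_integral[OF p] is_density_integral[OF q] by simp
  finally show ?thesis .
qed

lemma one_le_hellinger_integral:
  assumes "1 \<le> \<alpha>" and p: "is_density M p" and q: "is_density M q"
    and abs_cont: "\<forall>x\<in>space M. 0 < p x \<longrightarrow> 0 < q x"
    and int: "integrable M (\<lambda>x. p x powr \<alpha> * q x powr (1 - \<alpha>))"
  shows "1 \<le> hellinger_integral M \<alpha> p q"
proof -
  have "\<alpha> * p x + (1 - \<alpha>) * q x \<le> p x powr \<alpha> * q x powr (1 - \<alpha>)" if "x \<in> space M" for x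
  proof (cases "p x = 0")
    case True
    then show ?thesis using that assms by (auto simp: is_density_def mult_nonpos_nonneg)
  next
    case False
    then show ?thesis using that assms by (intro Youngs_inequality_reverse) (auto simp: is_density_def)
  qed
  then have "(\<integral>x. \<alpha> * p x + (1 - \<alpha>) * q x \<partial>M) \<le> hellinger_integral M \<alpha> p q"
    unfolding hellinger_integral_def
    using is_density_integral[OF p] is_density_integral[OF q] int by (intro integral_mono) auto
  moreover have "(\<integral>x. \<alpha> * p x + (1 - \<alpha>) * q x \<partial>M) = 1"
    using is_density_integral[OF p] is_density_integral[OF q] by simp
  ultimately show ?thesis by simp
qed

lemma gibbs_inequality:
  assumes p: "is_density M p" and q: "is_density M q"
    and abs_cont: "\<forall>x\<in>space M. 0 < p x \<longrightarrow> 0 < q x"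
    and int_pq: "integrable M (\<lambda>x. p x * ln (q x))" and int_pp: "integrable M (\<lambda>x. p x * ln (p x))"
  shows "(\<integral>x. p x * ln (q x) \<partial>M) \<le> (\<integral>x. p x * ln (p x) \<partial>M)"
proof -
  have "p x * ln (q x) \<le> p x * ln (p x) + (q x - p x)" if "x \<in> space M" for x
  proof (cases "p x = 0")
    case True
    then show ?thesis using that q by (simp add: is_density_def)
  next
    case False
    then have "0 < p x" "0 < q x" using that p abs_cont by (auto simp: is_density_def)
    then have "p x * ln (q x / p x) \<le> p x * (q x / p x - 1)"
      by (intro mult_left_mono ln_le_minus_one) auto
    then show ?thesis using \<open>0 < p x\<close> \<open>0 < q x\<close> by (simp add: ln_div algebra_simps)
  qed
  then have "(\<integral>x. p x * ln (q x) \<partial>M) \<le> (\<integral>x. p x * ln (p x) + (q x - p x) \<partial>M)"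
    using is_density_integral[OF p] is_density_integral[OF q] int_pq int_pp
    by (intro integral_mono) auto
  also have "\<dots> = (\<integral>x. p x * ln (p x) \<partial>M)"
    using is_density_integral[OF p] is_density_integral[OF q] int_pp by simp
  finally show ?thesis .
qed

lemma KL_div_eq_cross_entropy:
  assumes "\<forall>x\<in>space M. 0 \<le> p x" "\<forall>x\<in>space M. 0 < q x"
    and int_pq: "integrable M (\<lambda>x. p x * ln (q x))"
  shows "KL_div M p q =
    (if integrable M (\<lambda>x. p x * ln (p x))
     then ereal ((\<integral>x. p x * ln (p x) \<partial>M) - (\<integral>x. p x * ln (q x) \<partial>M)) else \<infinity>)"
proof -
  have pw: "p x * ln (p x / q x) = p x * ln (p x) - p x * ln (q x)" if "x \<in> space M" for x
    using that assms(1,2) by (cases "p x = 0") (auto simp: ln_div right_diff_distrib)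
  have "integrable M (\<lambda>x. p x * ln (p x / q x)) \<longleftrightarrow> integrable M (\<lambda>x. p x * ln (p x) - p x * ln (q x))"
    using pw by (intro Bochner_Integration.integrable_cong) auto
  also have "\<dots> \<longleftrightarrow> integrable M (\<lambda>x. p x * ln (p x))"
  proof
    assume "integrable M (\<lambda>x. p x * ln (p x) - p x * ln (q x))"
    from Bochner_Integration.integrable_add[OF this int_pq]
    show "integrable M (\<lambda>x. p x * ln (p x))" by simp
  qed (use int_pq in auto)
  finally have "integrable M (\<lambda>x. p x * ln (p x / q x)) \<longleftrightarrow> integrable M (\<lambda>x. p x * ln (p x))" .
  moreover have "integrable M (\<lambda>x. p x * ln (p x)) \<Longrightarrow>
      (\<integral>x. p x * ln (p x / q x) \<partial>M) = (\<integral>x. p x * ln (p x) \<partial>M) - (\<integral>x. p x * ln (q x) \<partial>M)"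
    using pw int_pq by (subst Bochner_Integration.integral_cong[OF refl pw]) auto
  ultimately show ?thesis
    using assms(2) by (simp add: KL_div_def)
qed

lemma eln_mono: "I \<le> J \<Longrightarrow> eln I \<le> eln J"
  unfolding eln_def
  by (cases I; cases J) (auto simp: ennreal_le_iff2 ennreal_eq_0_iff top_unique)

lemma renyi_div_le_of_less_one:
  assumes "\<alpha> < 1"
    and "(\<integral>\<^sup>+x. rd_integrand \<alpha> (p x) (q\<^sub>2 x) \<partial>M) \<le> (\<integral>\<^sup>+x. rd_integrand \<alpha> (p x) (q\<^sub>1 x) \<partial>M)"
  shows "renyi_div M \<alpha> p q\<^sub>1 \<le> renyi_div M \<alpha> p q\<^sub>2"
proof -
  have "ereal (1 / (1 - \<alpha>)) * eln (\<integral>\<^sup>+x. rd_integrand \<alpha> (p x) (q\<^sub>2 x) \<partial>M)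
      \<le> ereal (1 / (1 - \<alpha>)) * eln (\<integral>\<^sup>+x. rd_integrand \<alpha> (p x) (q\<^sub>1 x) \<partial>M)"
    using assms by (intro ereal_mult_left_mono eln_mono) auto
  moreover have neg: "ereal (1 / (\<alpha> - 1)) * x = - (ereal (1 / (1 - \<alpha>)) * x)" for x
  proof -
    have "ereal (1 / (\<alpha> - 1)) = - ereal (1 / (1 - \<alpha>))"
      by (simp add: minus_divide_right)
    then show ?thesis by (metis ereal_mult_minus_left)
  qed
  ultimately show ?thesis
    using assms unfolding renyi_div_def neg by simp
qed

lemma renyi_div_le_of_greater_one:
  assumes "1 < \<alpha>"
    and "(\<integral>\<^sup>+x. rd_integrand \<alpha> (p x) (q\<^sub>1 x) \<partial>M) \<le> (\<integral>\<^sup>+x. rd_integrand \<alpha> (p x) (q\<^sub>2 x) \<partial>M)"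
  shows "renyi_div M \<alpha> p q\<^sub>1 \<le> renyi_div M \<alpha> p q\<^sub>2"
  using assms by (simp add: renyi_div_def ereal_mult_left_mono eln_mono)

lemma rd_integrand_eq_powr:
  "0 \<le> a \<Longrightarrow> 0 < b \<Longrightarrow> rd_integrand \<alpha> a b = ennreal (a powr \<alpha> * b powr (1 - \<alpha>))"
  by (simp add: rd_integrand_def)

lemma nn_integral_rd_integrand_split:
  assumes [measurable]: "S \<in> sets M" "p \<in> borel_measurable M" "q \<in> borel_measurable M"
    and p_nonneg: "\<forall>x\<in>space M. 0 \<le> p x"
    and q_pos: "\<forall>x\<in>S. 0 < q x" and q_zero: "\<forall>x\<in>space M - S. q x = 0"
    and int: "integrable M (\<lambda>x. restr p S x powr \<alpha> * q x powr (1 - \<alpha>))"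
  shows "(\<integral>\<^sup>+x. rd_integrand \<alpha> (p x) (q x) \<partial>M)
    = ennreal (hellinger_integral M \<alpha> (restr p S) q) + (\<integral>\<^sup>+x\<in>space M - S. rd_integrand \<alpha> (p x) 0 \<partial>M)"
proof -
  have pw: "rd_integrand \<alpha> (p x) (q x) = ennreal (restr p S x powr \<alpha> * q x powr (1 - \<alpha>))
      + rd_integrand \<alpha> (p x) 0 * indicator (space M - S) x" if "x \<in> space M" for x
    using that p_nonneg q_pos q_zero sets.sets_into_space[of S M]
    by (cases "x \<in> S") (auto simp: rd_integrand_eq_powr restr_def)
  have [measurable]: "(\<lambda>x. rd_integrand \<alpha> (p x) 0) \<in> borel_measurable M"
    unfolding rd_integrand_def by measurable
  have "(\<integral>\<^sup>+x. rd_integrand \<alpha> (p x) (q x) \<partial>M)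
      = (\<integral>\<^sup>+x. ennreal (restr p S x powr \<alpha> * q x powr (1 - \<alpha>))
          + rd_integrand \<alpha> (p x) 0 * indicator (space M - S) x \<partial>M)"
    using pw by (intro nn_integral_cong) auto
  also have "\<dots> = (\<integral>\<^sup>+x. ennreal (restr p S x powr \<alpha> * q x powr (1 - \<alpha>)) \<partial>M)
        + (\<integral>\<^sup>+x\<in>space M - S. rd_integrand \<alpha> (p x) 0 \<partial>M)"
    by (intro nn_integral_add) (auto simp: restr_def)
  also have "(\<integral>\<^sup>+x. ennreal (restr p S x powr \<alpha> * q x powr (1 - \<alpha>)) \<partial>M)
      = ennreal (hellinger_integral M \<alpha> (restr p S) q)"
    unfolding hellinger_integral_def using int by (intro nn_integral_eq_integral) auto
  finally show ?thesis .
qed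

section \<open>Lambda-exponential families\<close>

lemma expc_measurable [measurable]:
  fixes T :: "'x \<Rightarrow> 'h::euclidean_space"
  assumes [measurable]: "T \<in> borel_measurable M"
  shows "expc l \<theta> T \<in> borel_measurable M"
  unfolding expc_def[abs_def] by measurable

lemma expc_nonneg: "0 \<le> expc l \<theta> T x"
  by (simp add: expc_def)

lemma integral_mult_affine_inner:
  fixes T :: "'x \<Rightarrow> 'h::euclidean_space"
  assumes "integrable M w" "integrable M (\<lambda>x. w x *\<^sub>R T x)"
  shows "integrable M (\<lambda>x. w x * (c + v \<bullet> T x))"
    "(\<integral>x. w x * (c + v \<bullet> T x) \<partial>M) = c * integral\<^sup>L M w + v \<bullet> (\<integral>x. w x *\<^sub>R T x \<partial>M)"
proof -
  have eq: "w x * (c + v \<bullet> T x) = c * w x + v \<bullet> (w x *\<^sub>R T x)" for x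
    by (simp add: algebra_simps)
  have int: "integrable M (\<lambda>x. c * w x)" "integrable M (\<lambda>x. v \<bullet> (w x *\<^sub>R T x))"
    using integrable_mult_right[OF assms(1)] integrable_inner_right[OF assms(2)] by blast+
  then show "integrable M (\<lambda>x. w x * (c + v \<bullet> T x))"
    unfolding eq by (rule Bochner_Integration.integrable_add)
  have "(\<integral>x. w x * (c + v \<bullet> T x) \<partial>M) = (\<integral>x. c * w x \<partial>M) + (\<integral>x. v \<bullet> (w x *\<^sub>R T x) \<partial>M)"
    unfolding eq using int by (rule Bochner_Integration.integral_add)
  also have "(\<integral>x. v \<bullet> (w x *\<^sub>R T x) \<partial>M) = v \<bullet> (\<integral>x. w x *\<^sub>R T x \<partial>M)"
    by (rule integral_inner_right) (use assms(2) in blast)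
  finally show "(\<integral>x. w x * (c + v \<bullet> T x) \<partial>M) = c * integral\<^sup>L M w + v \<bullet> (\<integral>x. w x *\<^sub>R T x \<partial>M)"
    by simp
qed

locale lambda_exponential_family =
  fixes m :: "'x measure" and T :: "'x \<Rightarrow> 'h::euclidean_space" and l \<alpha> :: real and S :: "'x set"
  assumes T_measurable [measurable]: "T \<in> borel_measurable m"
    and alpha_eq: "\<alpha> = 1 - l"
    and family_A: "assumptionA m T l \<alpha>"
    and family_B: "assumptionB m T l \<alpha> S"
begin

abbreviation Z :: "'h \<Rightarrow> real" where
  "Z \<theta> \<equiv> enn2real (partfn m T l \<theta>)"

lemma alpha_pos: "0 < \<alpha>"
  using family_A by (simp add: assumptionA_def)

lemma
  assumes "\<theta> \<in> dom_phi m T l"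
  shows integrable_expc: "integrable m (expc l \<theta> T)"
    and Z_eq_integral: "Z \<theta> = (\<integral>x. expc l \<theta> T x \<partial>m)"
    and Z_pos: "0 < Z \<theta>"
proof -
  have finite: "partfn m T l \<theta> < \<infinity>"
    using assms by (auto simp: dom_phi_def phi_def eln_def top.not_eq_extremum split: if_splits)
  have "phi m T l \<theta> \<noteq> -\<infinity>"
    using family_A by (simp add: assumptionA_def)
  then have nonzero: "partfn m T l \<theta> \<noteq> 0"
    by (auto simp: phi_def eln_def)
  show int: "integrable m (expc l \<theta> T)"
    using finite by (intro integrableI_nonneg) (auto simp: expc_nonneg partfn_def)
  have "partfn m T l \<theta> = ennreal (\<integral>x. expc l \<theta> T x \<partial>m)"
    unfolding partfn_def using int by (intro nn_integral_eq_integral) (auto simp: expc_nonneg)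
  then show "Z \<theta> = (\<integral>x. expc l \<theta> T x \<partial>m)"
    by (simp add: expc_nonneg integral_nonneg_AE)
  show "0 < Z \<theta>"
    using finite nonzero by (simp add: enn2real_positive_iff top.not_eq_extremum zero_less_iff_neq_zero)
qed

lemma support_eq: "\<theta> \<in> dom_phi m T l \<Longrightarrow> supp m T l \<theta> = S"
  using family_B by (simp add: assumptionB_def)

lemma S_sets [measurable]: "S \<in> sets m"
proof -
  obtain \<theta> where "\<theta> \<in> dom_phi m T l"
    using family_A by (auto simp: assumptionA_def)
  have "supp m T l \<theta> \<in> sets m"
    unfolding supp_def by measurable
  then show ?thesis
    using support_eq[OF \<open>\<theta> \<in> dom_phi m T l\<close>] by simp
qed

lemma S_eq_space:
  assumes "l = 0"
  shows "S = space m"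
proof -
  obtain \<theta> where "\<theta> \<in> dom_phi m T l"
    using family_A by (auto simp: assumptionA_def)
  then show ?thesis
    using support_eq assms by (auto simp: supp_def)
qed

lemma mem_S_iff: "\<theta> \<in> dom_phi m T l \<Longrightarrow> x \<in> space m \<Longrightarrow> x \<in> S \<longleftrightarrow> 0 < 1 + l * (\<theta> \<bullet> T x)"
  using support_eq[of \<theta>] by (auto simp: supp_def)

lemma S_subset_space: "S \<subseteq> space m"
  using family_B by (simp add: assumptionB_def)

lemma qdens_pos: "\<theta> \<in> dom_phi m T l \<Longrightarrow> x \<in> S \<Longrightarrow> 0 < qdens m T l \<theta> x"
  using mem_S_iff[of \<theta> x] S_subset_space Z_pos[of \<theta>] by (auto simp: qdens_def expc_def)

lemma qdens_outside: "\<theta> \<in> dom_phi m T l \<Longrightarrow> x \<in> space m - S \<Longrightarrow> qdens m T l \<theta> x = 0"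
  using mem_S_iff[of \<theta> x] by (auto simp: qdens_def expc_def)

lemma restr_qdens: "\<theta> \<in> dom_phi m T l \<Longrightarrow> x \<in> space m \<Longrightarrow> restr (qdens m T l \<theta>) S x = qdens m T l \<theta> x"
  using qdens_outside[of \<theta> x] by (cases "x \<in> S") (auto simp: restr_def)

lemma qdens_measurable [measurable]: "qdens m T l \<theta> \<in> borel_measurable m"
  unfolding qdens_def[abs_def] by measurable

lemma is_density_qdens:
  assumes "\<theta> \<in> dom_phi m T l"
  shows "is_density m (qdens m T l \<theta>)"
proof -
  have "(\<integral>\<^sup>+x. ennreal (qdens m T l \<theta> x) \<partial>m) = ennreal (\<integral>x. expc l \<theta> T x / Z \<theta> \<partial>m)"
    unfolding qdens_def using integrable_expc[OF assms]
    by (intro nn_integral_eq_integral) (auto simp: expc_nonneg)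
  also have "\<dots> = 1"
    using Z_eq_integral[OF assms] Z_pos[OF assms] by simp
  finally show ?thesis
    by (auto simp: is_density_def qdens_def expc_nonneg)
qed

lemma qdens_powr_affine:
  assumes "\<theta> \<in> dom_phi m T l" "x \<in> S"
  shows "qdens m T l \<theta> x powr l = (1 + l * (\<theta> \<bullet> T x)) / Z \<theta> powr l"
proof (cases "l = 0")
  case True
  then show ?thesis using qdens_pos[OF assms] Z_pos[OF assms(1)] by simp
next
  case False
  have "0 < 1 + l * (\<theta> \<bullet> T x)"
    using assms S_subset_space mem_S_iff by auto
  then show ?thesis
    using False Z_pos[OF assms(1)]
    by (simp add: qdens_def expc_def powr_divide powr_powr)
qed

lemma ln_qdens:
  assumes "l = 0" "\<theta> \<in> dom_phi m T l"
  shows "ln (qdens m T l \<theta> x) = \<theta> \<bullet> T x - ln (Z \<theta>)"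
  using assms Z_pos[OF assms(2)] by (simp add: qdens_def expc_def ln_div)

lemma
  assumes "compatible m T l \<alpha> p \<theta>" "\<theta> \<in> dom_phi m T l" and [measurable]: "p \<in> borel_measurable m"
  shows compatible_integrable: "integrable m (\<lambda>x. restr p S x powr \<alpha>)"
    and compatible_integrable_T: "integrable m (\<lambda>x. restr p S x powr \<alpha> *\<^sub>R T x)"
    and compatible_integral_pos: "0 < (\<integral>x. restr p S x powr \<alpha> \<partial>m)"
proof -
  have pos: "0 < (\<integral>\<^sup>+x. ennreal (restr p S x powr \<alpha>) \<partial>m)"
    and fin: "(\<integral>\<^sup>+x. ennreal (restr p S x powr \<alpha>) \<partial>m) < \<infinity>"
    and "integrable m (\<lambda>x. restr p S x powr \<alpha> *\<^sub>R T x)"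
    using assms(1) by (simp_all add: compatible_def support_eq[OF assms(2)])
  then show "integrable m (\<lambda>x. restr p S x powr \<alpha> *\<^sub>R T x)" by simp
  show int: "integrable m (\<lambda>x. restr p S x powr \<alpha>)"
    using fin by (intro integrableI_nonneg) (auto simp: restr_def)
  have "(\<integral>\<^sup>+x. ennreal (restr p S x powr \<alpha>) \<partial>m) = ennreal (\<integral>x. restr p S x powr \<alpha> \<partial>m)"
    using int by (intro nn_integral_eq_integral) auto
  then show "0 < (\<integral>x. restr p S x powr \<alpha> \<partial>m)"
    using pos by (simp add: ennreal_less_zero_iff)
qed

end

section \<open>Densities matching the escort moment of a family member\<close>

locale moment_matching = lambda_exponential_family m T l \<alpha> S
  for m :: "'x measure" and T :: "'x \<Rightarrow> 'h::euclidean_space" and l \<alpha> :: real and S :: "'x set" +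
  fixes \<pi> :: "'x \<Rightarrow> real" and \<theta>s :: 'h
  assumes pi_density: "is_density m \<pi>"
    and pi_compatible: "compatible m T l \<alpha> \<pi> \<theta>s"
    and \<theta>s_dom: "\<theta>s \<in> dom_phi m T l"
    and moment: "escort_exp m \<alpha> (qdens m T l \<theta>s) T = escort_exp m \<alpha> (restr \<pi> S) T"
begin

definition escort_ratio :: real where
  "escort_ratio = (\<integral>x. restr \<pi> S x powr \<alpha> \<partial>m) / (\<integral>x. qdens m T l \<theta>s x powr \<alpha> \<partial>m)"

lemma pi_measurable [measurable]: "\<pi> \<in> borel_measurable m"
  using pi_density by (simp add: is_density_def)

lemma
  shows integrable_escort_pi: "integrable m (\<lambda>x. restr \<pi> S x powr \<alpha>)"
    and integrable_escort_pi_T: "integrable m (\<lambda>x. restr \<pi> S x powr \<alpha> *\<^sub>R T x)"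
    and integral_escort_pi_pos: "0 < (\<integral>x. restr \<pi> S x powr \<alpha> \<partial>m)"
  using compatible_integrable compatible_integrable_T compatible_integral_pos pi_compatible \<theta>s_dom
  by auto

lemma
  shows integrable_escort_qs: "integrable m (\<lambda>x. qdens m T l \<theta>s x powr \<alpha>)"
    and integrable_escort_qs_T: "integrable m (\<lambda>x. qdens m T l \<theta>s x powr \<alpha> *\<^sub>R T x)"
    and integral_escort_qs_pos: "0 < (\<integral>x. qdens m T l \<theta>s x powr \<alpha> \<partial>m)"
proof -
  have "compatible m T l \<alpha> (qdens m T l \<theta>s) \<theta>s"
    using family_B \<theta>s_dom by (simp add: assumptionB_def Q_compatible_def)
  then have "integrable m (\<lambda>x. restr (qdens m T l \<theta>s) S x powr \<alpha>)"
    "integrable m (\<lambda>x. restr (qdens m T l \<theta>s) S x powr \<alpha> *\<^sub>R T x)"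
    "0 < (\<integral>x. restr (qdens m T l \<theta>s) S x powr \<alpha> \<partial>m)"
    using compatible_integrable compatible_integrable_T compatible_integral_pos \<theta>s_dom by auto
  then show "integrable m (\<lambda>x. qdens m T l \<theta>s x powr \<alpha>)"
    "integrable m (\<lambda>x. qdens m T l \<theta>s x powr \<alpha> *\<^sub>R T x)"
    "0 < (\<integral>x. qdens m T l \<theta>s x powr \<alpha> \<partial>m)"
    using restr_qdens[OF \<theta>s_dom]
    by (simp_all cong: Bochner_Integration.integrable_cong Bochner_Integration.integral_cong)
qed

lemma escort_ratio_pos: "0 < escort_ratio"
  using integral_escort_pi_pos integral_escort_qs_pos by (simp add: escort_ratio_def)

lemma escort_mass_proportional:
  "(\<integral>x. restr \<pi> S x powr \<alpha> \<partial>m) = escort_ratio * (\<integral>x. qdens m T l \<theta>s x powr \<alpha> \<partial>m)"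
  using integral_escort_qs_pos by (simp add: escort_ratio_def)

lemma escort_moment_proportional:
  "(\<integral>x. restr \<pi> S x powr \<alpha> *\<^sub>R T x \<partial>m) = escort_ratio *\<^sub>R (\<integral>x. qdens m T l \<theta>s x powr \<alpha> *\<^sub>R T x \<partial>m)"
    (is "?M\<pi> = _ *\<^sub>R ?Mq")
proof -
  let ?I\<pi> = "\<integral>x. restr \<pi> S x powr \<alpha> \<partial>m" and ?Iq = "\<integral>x. qdens m T l \<theta>s x powr \<alpha> \<partial>m"
  have "?M\<pi> = ?I\<pi> *\<^sub>R ((1 / ?I\<pi>) *\<^sub>R ?M\<pi>)"
    using integral_escort_pi_pos by simp
  also have "(1 / ?I\<pi>) *\<^sub>R ?M\<pi> = (1 / ?Iq) *\<^sub>R ?Mq"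
    using moment by (simp add: escort_exp_def)
  finally show ?thesis
    by (simp add: escort_ratio_def)
qed

lemma integral_escort_affine:
  assumes g: "\<forall>x\<in>space m. g x = c + v \<bullet> T x"
  shows "integrable m (\<lambda>x. restr \<pi> S x powr \<alpha> * g x)"
    and "integrable m (\<lambda>x. qdens m T l \<theta>s x powr \<alpha> * g x)"
    and "(\<integral>x. restr \<pi> S x powr \<alpha> * g x \<partial>m) = escort_ratio * (\<integral>x. qdens m T l \<theta>s x powr \<alpha> * g x \<partial>m)"
proof -
  note pi = integral_mult_affine_inner[OF integrable_escort_pi integrable_escort_pi_T, of c v]
  note qs = integral_mult_affine_inner[OF integrable_escort_qs integrable_escort_qs_T, of c v]
  show "integrable m (\<lambda>x. restr \<pi> S x powr \<alpha> * g x)" "integrable m (\<lambda>x. qdens m T l \<theta>s x powr \<alpha> * g x)"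
    using pi(1) qs(1) g by (simp_all cong: Bochner_Integration.integrable_cong)
  have "(\<integral>x. restr \<pi> S x powr \<alpha> * g x \<partial>m) = (\<integral>x. restr \<pi> S x powr \<alpha> * (c + v \<bullet> T x) \<partial>m)"
    using g by (intro Bochner_Integration.integral_cong) auto
  also have "\<dots> = c * (\<integral>x. restr \<pi> S x powr \<alpha> \<partial>m) + v \<bullet> (\<integral>x. restr \<pi> S x powr \<alpha> *\<^sub>R T x \<partial>m)"
    by (rule pi(2))
  also have "\<dots> = escort_ratio * (c * (\<integral>x. qdens m T l \<theta>s x powr \<alpha> \<partial>m)
      + v \<bullet> (\<integral>x. qdens m T l \<theta>s x powr \<alpha> *\<^sub>R T x \<partial>m))"
    by (simp add: escort_mass_proportional escort_moment_proportional algebra_simps)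
  also have "c * (\<integral>x. qdens m T l \<theta>s x powr \<alpha> \<partial>m) + v \<bullet> (\<integral>x. qdens m T l \<theta>s x powr \<alpha> *\<^sub>R T x \<partial>m)
      = (\<integral>x. qdens m T l \<theta>s x powr \<alpha> * (c + v \<bullet> T x) \<partial>m)"
    by (rule qs(2)[symmetric])
  also have "(\<integral>x. qdens m T l \<theta>s x powr \<alpha> * (c + v \<bullet> T x) \<partial>m) = (\<integral>x. qdens m T l \<theta>s x powr \<alpha> * g x \<partial>m)"
    using g by (intro Bochner_Integration.integral_cong) auto
  finally show "(\<integral>x. restr \<pi> S x powr \<alpha> * g x \<partial>m) = escort_ratio * (\<integral>x. qdens m T l \<theta>s x powr \<alpha> * g x \<partial>m)" .
qed

lemma hellinger_integral_proportional:
  assumes \<theta>: "\<theta> \<in> dom_phi m T l"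
  shows "integrable m (\<lambda>x. restr \<pi> S x powr \<alpha> * qdens m T l \<theta> x powr (1 - \<alpha>))"
    and "integrable m (\<lambda>x. qdens m T l \<theta>s x powr \<alpha> * qdens m T l \<theta> x powr (1 - \<alpha>))"
    and "hellinger_integral m \<alpha> (restr \<pi> S) (qdens m T l \<theta>)
      = escort_ratio * hellinger_integral m \<alpha> (qdens m T l \<theta>s) (qdens m T l \<theta>)"
proof -
  define g where "g x = (1 + l * (\<theta> \<bullet> T x)) / Z \<theta> powr l" for x
  have g_affine: "\<forall>x\<in>space m. g x = 1 / Z \<theta> powr l + ((l / Z \<theta> powr l) *\<^sub>R \<theta>) \<bullet> T x"
    by (simp add: g_def add_divide_distrib)
  have coupling: "f x powr \<alpha> * qdens m T l \<theta> x powr (1 - \<alpha>) = f x powr \<alpha> * g x"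
    if "x \<in> space m" "x \<notin> S \<Longrightarrow> f x = 0" for f x
    using that qdens_powr_affine[OF \<theta>] by (cases "x \<in> S") (auto simp: g_def alpha_eq)
  have pi_eq: "restr \<pi> S x powr \<alpha> * qdens m T l \<theta> x powr (1 - \<alpha>) = restr \<pi> S x powr \<alpha> * g x"
    if "x \<in> space m" for x
    using that by (intro coupling) (auto simp: restr_def)
  have qs_eq: "qdens m T l \<theta>s x powr \<alpha> * qdens m T l \<theta> x powr (1 - \<alpha>) = qdens m T l \<theta>s x powr \<alpha> * g x"
    if "x \<in> space m" for x
    using that qdens_outside[OF \<theta>s_dom] by (intro coupling) auto
  note affine = integral_escort_affine[OF g_affine]
  show "integrable m (\<lambda>x. restr \<pi> S x powr \<alpha> * qdens m T l \<theta> x powr (1 - \<alpha>))"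
    using affine(1) pi_eq by (subst Bochner_Integration.integrable_cong) auto
  show "integrable m (\<lambda>x. qdens m T l \<theta>s x powr \<alpha> * qdens m T l \<theta> x powr (1 - \<alpha>))"
    using affine(2) qs_eq by (subst Bochner_Integration.integrable_cong) auto
  have "hellinger_integral m \<alpha> (restr \<pi> S) (qdens m T l \<theta>) = (\<integral>x. restr \<pi> S x powr \<alpha> * g x \<partial>m)"
    unfolding hellinger_integral_def by (rule Bochner_Integration.integral_cong[OF refl]) (rule pi_eq)
  also have "\<dots> = escort_ratio * (\<integral>x. qdens m T l \<theta>s x powr \<alpha> * g x \<partial>m)"
    by (rule affine(3))
  also have "(\<integral>x. qdens m T l \<theta>s x powr \<alpha> * g x \<partial>m) = hellinger_integral m \<alpha> (qdens m T l \<theta>s) (qdens m T l \<theta>)"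
    unfolding hellinger_integral_def by (rule Bochner_Integration.integral_cong[OF refl]) (rule qs_eq[symmetric])
  finally show "hellinger_integral m \<alpha> (restr \<pi> S) (qdens m T l \<theta>)
      = escort_ratio * hellinger_integral m \<alpha> (qdens m T l \<theta>s) (qdens m T l \<theta>)" .
qed

lemma nn_integral_rd_integrand_qdens:
  assumes \<theta>: "\<theta> \<in> dom_phi m T l"
  shows "(\<integral>\<^sup>+x. rd_integrand \<alpha> (\<pi> x) (qdens m T l \<theta> x) \<partial>m)
    = ennreal (escort_ratio * hellinger_integral m \<alpha> (qdens m T l \<theta>s) (qdens m T l \<theta>))
      + (\<integral>\<^sup>+x\<in>space m - S. rd_integrand \<alpha> (\<pi> x) 0 \<partial>m)"
  using nn_integral_rd_integrand_split[of S m \<pi> "qdens m T l \<theta>" \<alpha>] pi_density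
    qdens_pos[OF \<theta>] qdens_outside[OF \<theta>] hellinger_integral_proportional[OF \<theta>]
  by (simp add: is_density_def)

lemma renyi_div_minimal_ne_one:
  assumes "\<alpha> \<noteq> 1" and \<theta>: "\<theta> \<in> dom_phi m T l"
  shows "renyi_div m \<alpha> \<pi> (qdens m T l \<theta>s) \<le> renyi_div m \<alpha> \<pi> (qdens m T l \<theta>)"
proof -
  let ?H = "hellinger_integral m \<alpha> (qdens m T l \<theta>s)"
  have H_self: "?H (qdens m T l \<theta>s) = 1"
    using hellinger_integral_self[of m "qdens m T l \<theta>s" \<alpha>] is_density_qdens[OF \<theta>s_dom]
      is_density_integral[OF is_density_qdens[OF \<theta>s_dom]]
    by (simp add: is_density_def)
  have rd_mono: "(\<integral>\<^sup>+x. rd_integrand \<alpha> (\<pi> x) (qdens m T l \<theta>\<^sub>1 x) \<partial>m)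
      \<le> (\<integral>\<^sup>+x. rd_integrand \<alpha> (\<pi> x) (qdens m T l \<theta>\<^sub>2 x) \<partial>m)"
    if "\<theta>\<^sub>1 \<in> dom_phi m T l" "\<theta>\<^sub>2 \<in> dom_phi m T l" "?H (qdens m T l \<theta>\<^sub>1) \<le> ?H (qdens m T l \<theta>\<^sub>2)"
    for \<theta>\<^sub>1 \<theta>\<^sub>2
    unfolding nn_integral_rd_integrand_qdens[OF that(1)] nn_integral_rd_integrand_qdens[OF that(2)]
    using that(3) escort_ratio_pos by (intro add_right_mono ennreal_leI mult_left_mono) auto
  show ?thesis
  proof (cases "\<alpha> < 1")
    case True
    have "?H (qdens m T l \<theta>) \<le> 1"
      using True alpha_pos is_density_qdens[OF \<theta>s_dom] is_density_qdens[OF \<theta>]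
        hellinger_integral_proportional(2)[OF \<theta>]
      by (intro hellinger_integral_le_one) auto
    then show ?thesis
      using True H_self rd_mono[OF \<theta> \<theta>s_dom] by (intro renyi_div_le_of_less_one) auto
  next
    case False
    have "\<forall>x\<in>space m. 0 < qdens m T l \<theta>s x \<longrightarrow> 0 < qdens m T l \<theta> x"
      using qdens_outside[OF \<theta>s_dom] qdens_pos[OF \<theta>] by force
    then have "1 \<le> ?H (qdens m T l \<theta>)"
      using False is_density_qdens[OF \<theta>s_dom] is_density_qdens[OF \<theta>]
        hellinger_integral_proportional(2)[OF \<theta>]
      by (intro one_le_hellinger_integral) auto
    then show ?thesis
      using False assms(1) H_self rd_mono[OF \<theta>s_dom \<theta>] by (intro renyi_div_le_of_greater_one) auto
  qed
qed

lemma cross_entropy_moment: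
  assumes l: "l = 0" and \<theta>: "\<theta> \<in> dom_phi m T l"
  shows "integrable m (\<lambda>x. \<pi> x * ln (qdens m T l \<theta> x))"
    and "integrable m (\<lambda>x. qdens m T l \<theta>s x * ln (qdens m T l \<theta> x))"
    and "(\<integral>x. \<pi> x * ln (qdens m T l \<theta> x) \<partial>m) = (\<integral>x. qdens m T l \<theta>s x * ln (qdens m T l \<theta> x) \<partial>m)"
proof -
  have S: "S = space m"
    using S_eq_space l by simp
  have \<alpha>: "\<alpha> = 1"
    using alpha_eq l by simp
  have pi_w: "restr \<pi> S x powr \<alpha> = \<pi> x" if "x \<in> space m" for x
    using that pi_density by (simp add: S \<alpha> restr_def is_density_def)
  have qs_w: "qdens m T l \<theta>s x powr \<alpha> = qdens m T l \<theta>s x" if "x \<in> space m" for x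
    using that is_density_qdens[OF \<theta>s_dom] by (simp add: \<alpha> is_density_def)
  have "escort_ratio = 1"
    using escort_mass_proportional is_density_integral[OF pi_density]
      is_density_integral[OF is_density_qdens[OF \<theta>s_dom]]
    by (simp add: pi_w qs_w cong: Bochner_Integration.integral_cong)
  moreover note affine = integral_escort_affine[of "\<lambda>x. ln (qdens m T l \<theta> x)" "- ln (Z \<theta>)" \<theta>]
  moreover have "\<forall>x\<in>space m. ln (qdens m T l \<theta> x) = - ln (Z \<theta>) + \<theta> \<bullet> T x"
    using ln_qdens[OF l \<theta>] by simp
  ultimately show "integrable m (\<lambda>x. \<pi> x * ln (qdens m T l \<theta> x))"
    "integrable m (\<lambda>x. qdens m T l \<theta>s x * ln (qdens m T l \<theta> x))"
    "(\<integral>x. \<pi> x * ln (qdens m T l \<theta> x) \<partial>m) = (\<integral>x. qdens m T l \<theta>s x * ln (qdens m T l \<theta> x) \<partial>m)"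
    using pi_w qs_w
    by (simp_all cong: Bochner_Integration.integrable_cong Bochner_Integration.integral_cong)
qed

lemma KL_div_minimal:
  assumes l: "l = 0" and \<theta>: "\<theta> \<in> dom_phi m T l"
  shows "KL_div m \<pi> (qdens m T l \<theta>s) \<le> KL_div m \<pi> (qdens m T l \<theta>)"
proof -
  have S: "S = space m"
    using S_eq_space l by simp
  have KL: "KL_div m \<pi> (qdens m T l \<theta>') =
      (if integrable m (\<lambda>x. \<pi> x * ln (\<pi> x))
       then ereal ((\<integral>x. \<pi> x * ln (\<pi> x) \<partial>m) - (\<integral>x. \<pi> x * ln (qdens m T l \<theta>' x) \<partial>m)) else \<infinity>)"
    if "\<theta>' \<in> dom_phi m T l" for \<theta>'
    using pi_density qdens_pos[OF that] cross_entropy_moment(1)[OF l that]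
    by (intro KL_div_eq_cross_entropy) (auto simp: S is_density_def)
  have "(\<integral>x. \<pi> x * ln (qdens m T l \<theta> x) \<partial>m) = (\<integral>x. qdens m T l \<theta>s x * ln (qdens m T l \<theta> x) \<partial>m)"
    by (rule cross_entropy_moment(3)[OF l \<theta>])
  also have "\<dots> \<le> (\<integral>x. qdens m T l \<theta>s x * ln (qdens m T l \<theta>s x) \<partial>m)"
    using is_density_qdens[OF \<theta>s_dom] is_density_qdens[OF \<theta>] qdens_pos[OF \<theta>]
      cross_entropy_moment(2)[OF l \<theta>] cross_entropy_moment(2)[OF l \<theta>s_dom]
    by (intro gibbs_inequality) (auto simp: S)
  also have "\<dots> = (\<integral>x. \<pi> x * ln (qdens m T l \<theta>s x) \<partial>m)"
    by (rule cross_entropy_moment(3)[OF l \<theta>s_dom, symmetric])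
  finally show ?thesis
    by (simp add: KL[OF \<theta>] KL[OF \<theta>s_dom])
qed

lemma renyi_div_minimal:
  assumes "\<theta> \<in> dom_phi m T l"
  shows "renyi_div m \<alpha> \<pi> (qdens m T l \<theta>s) \<le> renyi_div m \<alpha> \<pi> (qdens m T l \<theta>)"
proof (cases "\<alpha> = 1")
  case True
  then have "l = 0"
    using alpha_eq by simp
  then show ?thesis
    using True KL_div_minimal[OF \<open>l = 0\<close> assms] by (simp add: renyi_div_def)
next
  case False
  then show ?thesis
    using assms by (rule renyi_div_minimal_ne_one)
qed

end

theorem proposition7:
  fixes m :: "'x measure" and T :: "'x \<Rightarrow> 'h::euclidean_space"
    and l \<alpha> :: real and S :: "'x set" and \<pi> :: "'x \<Rightarrow> real" and \<theta>s :: 'h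
  assumes T_meas: "T \<in> borel_measurable m"
    and alpha_def: "\<alpha> = 1 - l"
    and A: "assumptionA m T l \<alpha>"
    and B: "assumptionB m T l \<alpha> S"
    and pi_dens: "is_density m \<pi>"
    and pi_compat: "Q_compatible m T l \<alpha> \<pi>"
    and ths_dom: "\<theta>s \<in> dom_phi m T l"
    and moment: "escort_exp m \<alpha> (qdens m T l \<theta>s) T = escort_exp m \<alpha> (restr \<pi> S) T"
  shows "\<forall>\<theta>\<in>dom_phi m T l. renyi_div m \<alpha> \<pi> (qdens m T l \<theta>s) \<le> renyi_div m \<alpha> \<pi> (qdens m T l \<theta>)"
proof -
  interpret moment_matching m T l \<alpha> S \<pi> \<theta>s
    using assms by unfold_locales (auto simp: Q_compatible_def)
  show ?thesis
    using renyi_div_minimal by blast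
qed

end
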